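(* There exist a parametrized datatype $A$ with two parameters $\alpha,\beta$ and two contexts $\Gamma_1,\Gamma_2$ over $\alpha,\beta$ such that $\emptyset\vDash A: t(\Gamma_1)$ and $\emptyset\vDash A:t(\Gamma_2)$, but $\emptyset\nvDash A:t(\min(\Gamma_1,\Gamma_2))$, where $\min$ is taken pointwise.
   Context: Type expressions: $\tau,\kappa ::= \alpha \mid \mathsf{float}\mid\mathsf{int}\mid\mathsf{bool}\mid t(\tau_1,\dots,\tau_n)\mid \tau\to\kappa\mid \tau_1\times\dots\times\tau_n\mid \forall\alpha.\tau\mid\exists\alpha.\tau\mid (\tau \text{ with } \kappa_1=\kappa_2)$ (equality guard). Datatypes include boxed/unboxed variants and records and type synonyms $\tau$. Modes $\mathsf{Ind}<\mathsf{Sep}<\mathsf{Deepsep}$; a context $\Gamma$ assigns modes to type variables. Ground values: $v::=\mathsf{true}\mid\mathsf{false}\mid \mathrm{int}(n)\mid\mathrm{float}(x)\ (x\in\mathbb R)\mid(v_1,\dots,v_n)\mid\mathsf{function}\mid\{l_1:v_1;\dots\}\mid C\,v$. Ground types are closed type expressions. With the empty block of type-constructor definitions ($\sigma=\emptyset$), inhabitation $v\vDash\tau$ is the least relation such that: $\mathsf{true},\mathsf{false}\vDash\mathsf{bool}$; $\mathrm{int}(n)\vDash\mathsf{int}$; $\mathrm{float}(x)\vDash\mathsf{float}$; $\mathsf{function}\vDash\tau_1\to\tau_2$; $(v_1,\dots,v_n)\vDash\tau_1\times\dots\times\tau_n$ if each $v_i\vDash\tau_i$; $v\vDash\exists\alpha.\kappa$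 if $v\vDash\kappa[\tau/\alpha]$ for some ground $\tau$; $v\vDash\forall\alpha.\kappa$ if for all ground $\tau$; $v\vDash(\kappa\text{ with }\tau_1=\tau_2)$ if $\tau_1,\tau_2$ are syntactically equal and $v\vDash\kappa$; nothing inhabits $t(\dots)$. A value inhabits a type-synonym datatype $\tau$ iff it inhabits $\tau$ (and boxed variants/records are inhabited by the corresponding tagged values, unboxed ones by the values of their argument type). A set $X$ of values is separable iff all its elements are of the form $\mathrm{float}(x)$ or none are. A ground type $\tau$ has semantic mode $\mathsf{Ind}$ always, mode $\mathsf{Sep}$ iff its set of inhabitants is separable, and mode $\mathsf{Deepsep}$ iff every syntactic sub-component of $\tau$ has mode $\mathsf{Sep}$. A ground valuation $\gamma$ (map from type variables to ground types) satisfies $\Gamma$ iff $\gamma(\alpha)$ has semantic mode $m$ for each $(\alpha:m)\in\Gamma$. For a datatype $A$ with parameters $\vec\alpha$, $\emptyset\vDash A:t(\vec{\alpha:m})$ means: for every ground valuation $\gamma$ satisfying $\vec{\alpha:m}$, the set of values inhabiting the ground datatype $\gamma(A)$ is separable. *)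

theory Defs
  imports Main "HOL.Real"
begin

text \<open>Type variables are natural numbers. TCon is an (abstract) type constructor
  application t(tau_1,...,tau_n); TWith k t1 t2 is the equality guard (k with t1 = t2).\<close>

datatype tyexp =
    TVar nat
  | TFloat
  | TInt
  | TBool
  | TCon string "tyexp list"
  | TArrow tyexp tyexp
  | TProd "tyexp list"
  | TForall nat tyexp
  | TExists nat tyexp
  | TWith tyexp tyexp tyexp

fun fv :: "tyexp \<Rightarrow> nat set" where
  "fv (TVar a) = {a}"
| "fv TFloat = {}"
| "fv TInt = {}"
| "fv TBool = {}"
| "fv (TCon c ts) = (\<Union>t\<in>set ts. fv t)"
| "fv (TArrow t1 t2) = fv t1 \<union> fv t2"
| "fv (TProd ts) = (\<Union>t\<in>set ts. fv t)"
| "fv (TForall a t) = fv t - {a}"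
| "fv (TExists a t) = fv t - {a}"
| "fv (TWith k t1 t2) = fv k \<union> fv t1 \<union> fv t2"

definition ground :: "tyexp \<Rightarrow> bool" where
  "ground t \<longleftrightarrow> fv t = {}"

text \<open>Simultaneous substitution; used only with ground (closed) images, so no capture.\<close>
fun psubst :: "(nat \<Rightarrow> tyexp) \<Rightarrow> tyexp \<Rightarrow> tyexp" where
  "psubst g (TVar a) = g a"
| "psubst g TFloat = TFloat"
| "psubst g TInt = TInt"
| "psubst g TBool = TBool"
| "psubst g (TCon c ts) = TCon c (map (psubst g) ts)"
| "psubst g (TArrow t1 t2) = TArrow (psubst g t1) (psubst g t2)"
| "psubst g (TProd ts) = TProd (map (psubst g) ts)"
| "psubst g (TForall a t) = TForall a (psubst (g(a := TVar a)) t)"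
| "psubst g (TExists a t) = TExists a (psubst (g(a := TVar a)) t)"
| "psubst g (TWith k t1 t2) = TWith (psubst g k) (psubst g t1) (psubst g t2)"

definition subst1 :: "nat \<Rightarrow> tyexp \<Rightarrow> tyexp \<Rightarrow> tyexp" where
  "subst1 a t k = psubst (TVar(a := t)) k"

datatype val =
    VTrue
  | VFalse
  | VInt int
  | VFloat real
  | VTuple "val list"
  | VFunction
  | VRecord "(string \<times> val) list"
  | VCon string val

inductive inh :: "val \<Rightarrow> tyexp \<Rightarrow> bool" where
  inh_true: "inh VTrue TBool"
| inh_false: "inh VFalse TBool"
| inh_int: "inh (VInt n) TInt"
| inh_float: "inh (VFloat x) TFloat"
| inh_fun: "inh VFunction (TArrow t1 t2)"
| inh_tuple: "length vs = length ts \<Longrightarrow> (\<forall>i<length ts. inh (vs ! i) (ts ! i))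
              \<Longrightarrow> inh (VTuple vs) (TProd ts)"
| inh_exists: "ground t \<Longrightarrow> inh v (subst1 a t k) \<Longrightarrow> inh v (TExists a k)"
| inh_forall: "(\<forall>t. ground t \<longrightarrow> inh v (subst1 a t k)) \<Longrightarrow> inh v (TForall a k)"
| inh_with: "t1 = t2 \<Longrightarrow> inh v k \<Longrightarrow> inh v (TWith k t1 t2)"

datatype dtdef =
    Synonym tyexp
  | BoxedVariant "(string \<times> tyexp) list"
  | UnboxedVariant string tyexp
  | BoxedRecord "(string \<times> tyexp) list"
  | UnboxedRecord string tyexp

fun dt_fv :: "dtdef \<Rightarrow> nat set" where
  "dt_fv (Synonym t) = fv t"
| "dt_fv (BoxedVariant cs) = (\<Union>c\<in>set cs. fv (snd c))"
| "dt_fv (UnboxedVariant c t) = fv t"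
| "dt_fv (BoxedRecord fs) = (\<Union>f\<in>set fs. fv (snd f))"
| "dt_fv (UnboxedRecord l t) = fv t"

fun dt_subst :: "(nat \<Rightarrow> tyexp) \<Rightarrow> dtdef \<Rightarrow> dtdef" where
  "dt_subst g (Synonym t) = Synonym (psubst g t)"
| "dt_subst g (BoxedVariant cs) = BoxedVariant (map (\<lambda>(c, t). (c, psubst g t)) cs)"
| "dt_subst g (UnboxedVariant c t) = UnboxedVariant c (psubst g t)"
| "dt_subst g (BoxedRecord fs) = BoxedRecord (map (\<lambda>(l, t). (l, psubst g t)) fs)"
| "dt_subst g (UnboxedRecord l t) = UnboxedRecord l (psubst g t)"

fun dt_inh :: "val \<Rightarrow> dtdef \<Rightarrow> bool" where
  "dt_inh v (Synonym t) = inh v t"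
| "dt_inh v (BoxedVariant cs) =
     (\<exists>c u t. v = VCon c u \<and> (c, t) \<in> set cs \<and> inh u t)"
| "dt_inh v (UnboxedVariant c t) = inh v t"
| "dt_inh v (BoxedRecord fs) =
     (\<exists>ws. v = VRecord ws \<and> map fst ws = map fst fs \<and>
           (\<forall>i<length fs. inh (snd (ws ! i)) (snd (fs ! i))))"
| "dt_inh v (UnboxedRecord l t) = inh v t"

fun is_float :: "val \<Rightarrow> bool" where
  "is_float (VFloat x) = True"
| "is_float _ = False"

definition separable :: "val set \<Rightarrow> bool" where
  "separable X \<longleftrightarrow> (\<forall>v\<in>X. is_float v) \<or> (\<forall>v\<in>X. \<not> is_float v)"

datatype mode = Ind | Sep | Deepsep

fun mode_rank :: "mode \<Rightarrow> nat" where
  "mode_rank Ind = 0" | "mode_rank Sep = 1" | "mode_rank Deepsep = 2"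

definition mode_min :: "mode \<Rightarrow> mode \<Rightarrow> mode" where
  "mode_min m n = (if mode_rank m \<le> mode_rank n then m else n)"

fun subterms :: "tyexp \<Rightarrow> tyexp set" where
  "subterms (TVar a) = {TVar a}"
| "subterms TFloat = {TFloat}"
| "subterms TInt = {TInt}"
| "subterms TBool = {TBool}"
| "subterms (TCon c ts) = insert (TCon c ts) (\<Union>t\<in>set ts. subterms t)"
| "subterms (TArrow t1 t2) = insert (TArrow t1 t2) (subterms t1 \<union> subterms t2)"
| "subterms (TProd ts) = insert (TProd ts) (\<Union>t\<in>set ts. subterms t)"
| "subterms (TForall a t) = insert (TForall a t) (subterms t)"
| "subterms (TExists a t) = insert (TExists a t) (subterms t)"
| "subterms (TWith k t1 t2) = insert (TWith k t1 t2) (subterms k \<union> subterms t1 \<union> subterms t2)"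

definition sep_type :: "tyexp \<Rightarrow> bool" where
  "sep_type t \<longleftrightarrow> separable {v. inh v t}"

fun has_mode :: "tyexp \<Rightarrow> mode \<Rightarrow> bool" where
  "has_mode t Ind = True"
| "has_mode t Sep = sep_type t"
| "has_mode t Deepsep = (\<forall>s\<in>subterms t. ground s \<longrightarrow> sep_type s)"

type_synonym ctx = "(nat \<times> mode) list"

definition ground_valuation :: "(nat \<Rightarrow> tyexp) \<Rightarrow> bool" where
  "ground_valuation g \<longleftrightarrow> (\<forall>a. ground (g a))"

definition satisfies :: "(nat \<Rightarrow> tyexp) \<Rightarrow> ctx \<Rightarrow> bool" where
  "satisfies g G \<longleftrightarrow> (\<forall>(a, m)\<in>set G. has_mode (g a) m)"

text \<open>The semantic judgement  emptyset |= A : t(G).\<close>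
definition sem_sep :: "dtdef \<Rightarrow> ctx \<Rightarrow> bool" where
  "sem_sep A G \<longleftrightarrow>
     (\<forall>g. ground_valuation g \<and> satisfies g G \<longrightarrow> separable {v. dt_inh v (dt_subst g A)})"

end

theory Submission
  imports Defs
begin

text \<open>The counterexample is the synonym (\<alpha> with \<alpha> = \<beta>): a ground instance is inhabited
  only when \<alpha> and \<beta> are instantiated by the same type, and then it has exactly the
  inhabitants of that type. Hence it suffices that either one of \<alpha>, \<beta> be separable.
  With both unconstrained, however, one may take \<alpha> = \<beta> = \<exists>\<gamma>. \<gamma>, which is inhabited by
  floats and non-floats alike.\<close>

inductive_cases inh_TWithE: "inh v (TWith k t1 t2)"

lemma inh_TWith_iff: "inh v (TWith k t1 t2) \<longleftrightarrow> t1 = t2 \<and> inh v k"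
  by (auto elim: inh_TWithE intro: inh_with)

lemma inh_TExists_TVar: "inh v (TExists a (TVar a)) \<longleftrightarrow> (\<exists>t. ground t \<and> inh v t)"
proof
  assume "inh v (TExists a (TVar a))"
  then show "\<exists>t. ground t \<and> inh v t"
    by (cases rule: inh.cases) (auto simp: subst1_def)
next
  assume "\<exists>t. ground t \<and> inh v t"
  then show "inh v (TExists a (TVar a))"
    by (auto simp: subst1_def intro: inh_exists)
qed

lemma not_sep_type_TExists_TVar: "\<not> sep_type (TExists a (TVar a))"
proof -
  have "inh VTrue (TExists a (TVar a))"
    by (auto simp: inh_TExists_TVar ground_def intro!: exI[of _ TBool] inh_true)
  moreover have "inh (VFloat 0) (TExists a (TVar a))"
    by (auto simp: inh_TExists_TVar ground_def intro!: exI[of _ TFloat] inh_float)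
  ultimately show ?thesis
    by (fastforce simp: sep_type_def separable_def)
qed

definition guarded_synonym :: "nat \<Rightarrow> nat \<Rightarrow> dtdef" where
  "guarded_synonym a b = Synonym (TWith (TVar a) (TVar a) (TVar b))"

lemma dt_fv_guarded_synonym: "dt_fv (guarded_synonym a b) = {a, b}"
  by (auto simp: guarded_synonym_def)

lemma dt_inh_guarded_synonym:
  "dt_inh v (dt_subst g (guarded_synonym a b)) \<longleftrightarrow> g a = g b \<and> inh v (g a)"
  by (simp add: guarded_synonym_def inh_TWith_iff)

lemma sem_sep_guarded_synonym_left: "sem_sep (guarded_synonym a b) [(a, Sep), (b, m)]"
  by (auto simp: sem_sep_def satisfies_def dt_inh_guarded_synonym sep_type_def separable_def)

lemma sem_sep_guarded_synonym_right: "sem_sep (guarded_synonym a b) [(a, m), (b, Sep)]"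
  by (auto simp: sem_sep_def satisfies_def dt_inh_guarded_synonym sep_type_def separable_def)

lemma not_sem_sep_guarded_synonym_Ind: "\<not> sem_sep (guarded_synonym a b) [(a, Ind), (b, Ind)]"
proof
  assume "sem_sep (guarded_synonym a b) [(a, Ind), (b, Ind)]"
  moreover have "ground_valuation (\<lambda>_. TExists 0 (TVar 0))"
    by (simp add: ground_valuation_def ground_def)
  ultimately have "separable {v. dt_inh v (dt_subst (\<lambda>_. TExists 0 (TVar 0)) (guarded_synonym a b))}"
    by (simp add: sem_sep_def satisfies_def)
  then have "sep_type (TExists 0 (TVar 0))"
    by (simp add: dt_inh_guarded_synonym sep_type_def)
  then show False
    using not_sep_type_TExists_TVar by blast
qed

theorem mainTheorem4:
  shows "\<exists>(A :: dtdef) (\<alpha> :: nat) (\<beta> :: nat) m1 n1 m2 n2.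
           \<alpha> \<noteq> \<beta> \<and> dt_fv A \<subseteq> {\<alpha>, \<beta>} \<and>
           sem_sep A [(\<alpha>, m1), (\<beta>, n1)] \<and>
           sem_sep A [(\<alpha>, m2), (\<beta>, n2)] \<and>
           \<not> sem_sep A [(\<alpha>, mode_min m1 m2), (\<beta>, mode_min n1 n2)]"
proof -
  have "mode_min Sep Ind = Ind" "mode_min Ind Sep = Ind"
    by (simp_all add: mode_min_def)
  then show ?thesis
    using dt_fv_guarded_synonym sem_sep_guarded_synonym_left sem_sep_guarded_synonym_right
      not_sem_sep_guarded_synonym_Ind
    by (metis subset_refl zero_neq_one)
qed

end
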